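(* Let $f : X \to \mathbb{R}$. The following conditions are equivalent: (C1) $f$ is a limsup function; (C2) there is a sequence $g_0, g_1, \dots$ of lower semicontinuous functions $X \to \mathbb{R}$ converging pointwise to $f$; (C3) there is a non-increasing sequence $g_0 \ge g_1 \ge \cdots$ of lower semicontinuous functions $X \to \mathbb{R}$ converging pointwise to $f$; (C4) the subgraph $\mathrm{subgr}(f) = \{(x,r) \in X \times \mathbb{R} : f(x) \ge r\}$ is a $\mathbf{\Pi}^0_2$ (i.e. $G_\delta$) subset of $X \times \mathbb{R}$; (C5) for each $r \in \mathbb{R}$, the set $\{f \ge r\} = \{x \in X : f(x) \ge r\}$ is a $\mathbf{\Pi}^0_2$ subset of $X$.
   Context: Let $A$ be a non-empty countable set and $T$ a pruned tree on $A$ (a set of finite sequences of elements of $A$, closed under initial segments, in which every sequence has a proper extension in $T$). Let $X$ be the set of infinite branches of $T$, i.e. the sequences $x = (x_0, x_1, \dots) \in A^{\mathbb{N}}$ with $(x_0,\dots,x_t) \in T$ for all $t \in \mathbb{N}$. For $s \in T$, $O(s)$ denotes the set of $x \in X$ having $s$ as an initial segment; $X$ carries the topology generated by the base $\{O(s) : s \in T\}$. A function $f : X \to \mathbb{R}$ is a limsup function if there exists $u : T \to \mathbb{R}$ with $f(x) = \limsup_{t\to\infty} u(x_0,\dots,x_t)$ for every $x \in X$. *)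

theory Defs
  imports "HOL-Analysis.Analysis" "HOL-Library.Liminf_Limsup"
begin

definition pruned_tree :: "'a list set \<Rightarrow> bool" where
  "pruned_tree T \<longleftrightarrow>
     (\<forall>s\<in>T. \<forall>n. take n s \<in> T) \<and>
     (\<forall>s\<in>T. \<exists>s'\<in>T. length s < length s' \<and> take (length s) s' = s)"

definition branches :: "'a list set \<Rightarrow> (nat \<Rightarrow> 'a) set" where
  "branches T = {x. \<forall>t. map x [0..<Suc t] \<in> T}"

definition O_set :: "'a list set \<Rightarrow> 'a list \<Rightarrow> (nat \<Rightarrow> 'a) set" where
  "O_set T s = {x \<in> branches T. map x [0..<length s] = s}"

definition tree_topology :: "'a list set \<Rightarrow> (nat \<Rightarrow> 'a) topology" where
  "tree_topology T = topology_generated_by {O_set T s | s. s \<in> T}"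

definition limsup_function :: "'a list set \<Rightarrow> ((nat \<Rightarrow> 'a) \<Rightarrow> real) \<Rightarrow> bool" where
  "limsup_function T f \<longleftrightarrow>
     (\<exists>u :: 'a list \<Rightarrow> real. \<forall>x \<in> branches T.
        limsup (\<lambda>t. ereal (u (map x [0..<Suc t]))) = ereal (f x))"

definition lsc_on :: "'b topology \<Rightarrow> ('b \<Rightarrow> real) \<Rightarrow> bool" where
  "lsc_on X g \<longleftrightarrow> (\<forall>r. openin X {x \<in> topspace X. r < g x})"

definition subgraph :: "'b set \<Rightarrow> ('b \<Rightarrow> real) \<Rightarrow> ('b \<times> real) set" where
  "subgraph X f = {(x, r). x \<in> X \<and> r \<le> f x}"

end

theory Submission
  imports Defs
begin

text \<open>
  (C1) \<Longrightarrow> (C3): the tail suprema \<open>sup\<^sub>t\<^sub>\<ge>\<^sub>n u(x\<^sub>0..x\<^sub>t)\<close> are lower semicontinuous,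
  decrease in \<open>n\<close> and converge to the limsup.  (C2) \<Longrightarrow> (C4): \<open>r \<le> f x\<close> iff for all \<open>k, N\<close>
  some \<open>n \<ge> N\<close> has \<open>r < g\<^sub>n x + 1/(k+1)\<close>, and lower semicontinuous functions have open
  strict subgraphs.  (C4) \<Longrightarrow> (C5): sections of \<open>G\<^sub>\<delta>\<close> sets are \<open>G\<^sub>\<delta>\<close>.

  (C5) \<Longrightarrow> (C1) is the substance.  Enumerate the rationals as \<open>q\<^sub>0, q\<^sub>1, \<dots>\<close> and shrink
  descending open approximations of the sets \<open>{f \<ge> q\<^sub>i}\<close> to open sets \<open>V\<^sub>i\<^sup>k\<close> that are
  antitone in \<open>q\<^sub>i\<close>.  Let \<open>u(s)\<close> be the largest \<open>q\<^sub>i\<close> such that \<open>s\<close> is where a branch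
  first enters \<open>V\<^sub>i\<^sup>k\<close> (at length at least \<open>k \<ge> i\<close>).  If \<open>q\<^sub>i \<le> f x\<close>, then \<open>x\<close> lies in all
  \<open>V\<^sub>i\<^sup>k\<close> and enters them arbitrarily late, so the limsup is at least \<open>q\<^sub>i\<close>.  Conversely a
  branch enters each \<open>V\<^sub>i\<^sup>k\<close> at most once, so values above \<open>q\<^sub>m\<close> infinitely often put
  \<open>x\<close> into \<open>V\<^sub>m\<^sup>k\<close> for unboundedly many \<open>k\<close>, forcing \<open>f x \<ge> q\<^sub>m\<close>.
\<close>

lemma prefix_in_tree:
  assumes "pruned_tree T" "x \<in> branches T"
  shows "map x [0..<t] \<in> T"
proof -
  have "map x [0..<Suc t] \<in> T"
    using assms(2) by (simp add: branches_def)
  then have "take t (map x [0..<Suc t]) \<in> T"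
    using assms(1) unfolding pruned_tree_def by blast
  then show ?thesis
    by (simp add: take_map)
qed

lemma mem_O_set_prefix: "x \<in> branches T \<Longrightarrow> x \<in> O_set T (map x [0..<t])"
  by (simp add: O_set_def)

lemma O_set_prefix_antimono:
  "t \<le> t' \<Longrightarrow> O_set T (map x [0..<t']) \<subseteq> O_set T (map x [0..<t])"
  by (auto simp: O_set_def map_eq_conv)

lemma topspace_tree_topology:
  assumes "pruned_tree T"
  shows "topspace (tree_topology T) = branches T"
proof
  show "topspace (tree_topology T) \<subseteq> branches T"
    by (auto simp: tree_topology_def O_set_def)
  show "branches T \<subseteq> topspace (tree_topology T)"
  proof
    fix x assume x: "x \<in> branches T"
    then have "x \<in> O_set T (map x [0..<0])" "map x [0..<0] \<in> T"
      using mem_O_set_prefix prefix_in_tree[OF assms] by blast+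
    then show "x \<in> topspace (tree_topology T)"
      unfolding tree_topology_def by auto
  qed
qed

lemma openin_O_set: "s \<in> T \<Longrightarrow> openin (tree_topology T) (O_set T s)"
  unfolding tree_topology_def by (rule topology_generated_by_Basis) auto

lemma openin_tree_topology_prefix_subset:
  assumes "openin (tree_topology T) U" "x \<in> U"
  shows "\<exists>t. O_set T (map x [0..<t]) \<subseteq> U"
proof -
  have "generate_topology_on {O_set T s | s. s \<in> T} U"
    using assms(1) unfolding tree_topology_def by (rule openin_topology_generated_by)
  then have "\<forall>x\<in>U. \<exists>t. O_set T (map x [0..<t]) \<subseteq> U"
  proof induction
    case (Int a b)
    show ?case
    proof
      fix x assume "x \<in> a \<inter> b"
      then obtain t1 t2 where "O_set T (map x [0..<t1]) \<subseteq> a" "O_set T (map x [0..<t2]) \<subseteq> b"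
        using Int.IH by blast
      then have "O_set T (map x [0..<max t1 t2]) \<subseteq> a \<inter> b"
        using O_set_prefix_antimono[of t1 "max t1 t2" T x] O_set_prefix_antimono[of t2 "max t1 t2" T x]
        by auto
      then show "\<exists>t. O_set T (map x [0..<t]) \<subseteq> a \<inter> b" ..
    qed
  next
    case (Basis U)
    then obtain s where U: "U = O_set T s"
      by blast
    show ?case
    proof
      fix x assume "x \<in> U"
      then have "map x [0..<length s] = s"
        using U by (simp add: O_set_def)
      then show "\<exists>t. O_set T (map x [0..<t]) \<subseteq> U"
        using U by (intro exI[of _ "length s"]) simp
    qed
  qed blast+
  then show ?thesis
    using assms(2) by blast
qed

lemma openin_tree_topology_prefix_property:
  assumes "pruned_tree T"
  shows "openin (tree_topology T) {x \<in> branches T. \<exists>t. P (map x [0..<t])}"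
proof -
  have "{x \<in> branches T. \<exists>t. P (map x [0..<t])} = \<Union>(O_set T ` {s \<in> T. P s})"
  proof (intro equalityI subsetI)
    fix x assume "x \<in> {x \<in> branches T. \<exists>t. P (map x [0..<t])}"
    then obtain t where "x \<in> branches T" "P (map x [0..<t])"
      by blast
    moreover have "map x [0..<t] \<in> T" "x \<in> O_set T (map x [0..<t])"
      using mem_O_set_prefix prefix_in_tree[OF assms] calculation by blast+
    ultimately show "x \<in> \<Union>(O_set T ` {s \<in> T. P s})"
      by blast
  next
    fix x assume "x \<in> \<Union>(O_set T ` {s \<in> T. P s})"
    then obtain s where "P s" "x \<in> O_set T s"
      by blast
    then have "x \<in> branches T" "P (map x [0..<length s])"
      by (simp_all add: O_set_def)
    then show "x \<in> {x \<in> branches T. \<exists>t. P (map x [0..<t])}"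
      by blast
  qed
  then show ?thesis
    by (auto intro!: openin_Union openin_O_set)
qed

lemma tail_SUP_ereal_finite:
  fixes a :: "nat \<Rightarrow> real"
  assumes "limsup (\<lambda>t. ereal (a t)) < \<infinity>"
  shows "\<bar>SUP t\<in>{n..}. ereal (a t)\<bar> \<noteq> \<infinity>"
proof -
  obtain N where N: "(SUP t\<in>{N..}. ereal (a t)) < \<infinity>"
    using assms unfolding limsup_INF_SUP INF_less_iff by blast
  have "(SUP t\<in>{n..}. ereal (a t)) \<le> max (SUP t\<in>{N..}. ereal (a t)) (ereal (Max (a ` {..N})))"
  proof (rule SUP_least)
    fix t assume "t \<in> {n..}"
    show "ereal (a t) \<le> max (SUP t\<in>{N..}. ereal (a t)) (ereal (Max (a ` {..N})))"
    proof (cases "t \<le> N")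
      case True
      then show ?thesis
        by (simp add: le_max_iff_disj)
    next
      case False
      then have "ereal (a t) \<le> (SUP t\<in>{N..}. ereal (a t))"
        by (intro SUP_upper) simp
      then show ?thesis
        by (simp add: le_max_iff_disj)
    qed
  qed
  also have "\<dots> < \<infinity>"
    using N by (simp add: max_def)
  finally have "(SUP t\<in>{n..}. ereal (a t)) < \<infinity>" .
  moreover have "ereal (a n) \<le> (SUP t\<in>{n..}. ereal (a t))"
    by (rule SUP_upper) simp
  ultimately show ?thesis
    by auto
qed

lemma lsc_on_tail_SUP_prefix:
  assumes pruned: "pruned_tree T"
    and finite: "\<And>x. x \<in> branches T \<Longrightarrow> \<bar>SUP t\<in>{n..}. ereal (u (map x [0..<Suc t]))\<bar> \<noteq> \<infinity>"
  shows "lsc_on (tree_topology T) (\<lambda>x. real_of_ereal (SUP t\<in>{n..}. ereal (u (map x [0..<Suc t]))))"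
proof -
  have "r < real_of_ereal (SUP t\<in>{n..}. ereal (u (map x [0..<Suc t]))) \<longleftrightarrow>
      (\<exists>t. n < length (map x [0..<t]) \<and> r < u (map x [0..<t]))"
    if "x \<in> branches T" for r x
  proof -
    have "r < real_of_ereal (SUP t\<in>{n..}. ereal (u (map x [0..<Suc t]))) \<longleftrightarrow>
        (\<exists>t\<ge>n. r < u (map x [0..<Suc t]))"
      using finite[OF that] by (auto simp: ereal_less_real_iff less_SUP_iff)
    also have "\<dots> \<longleftrightarrow> (\<exists>t>n. r < u (map x [0..<t]))"
    proof
      assume "\<exists>t>n. r < u (map x [0..<t])"
      then obtain t where "n < Suc t" "r < u (map x [0..<Suc t])"
        by (metis Suc_pred' bot_nat_0.extremum_strict gr0I)
      then show "\<exists>t\<ge>n. r < u (map x [0..<Suc t])"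
        using less_Suc_eq_le by blast
    qed (use le_imp_less_Suc in blast)
    finally show ?thesis
      by simp
  qed
  then have eq: "{x \<in> topspace (tree_topology T).
        r < real_of_ereal (SUP t\<in>{n..}. ereal (u (map x [0..<Suc t])))} =
      {x \<in> branches T. \<exists>t. n < length (map x [0..<t]) \<and> r < u (map x [0..<t])}" for r
    using topspace_tree_topology[OF pruned] by auto
  then show ?thesis
    unfolding lsc_on_def eq by (intro allI openin_tree_topology_prefix_property[OF pruned])
qed

lemma limsup_function_imp_decreasing_lsc_limit:
  assumes pruned: "pruned_tree T" and "limsup_function T f"
  obtains g :: "nat \<Rightarrow> (nat \<Rightarrow> 'a) \<Rightarrow> real"
  where "\<And>n. lsc_on (tree_topology T) (g n)"
    and "\<And>n x. x \<in> branches T \<Longrightarrow> g (Suc n) x \<le> g n x"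
    and "\<And>x. x \<in> branches T \<Longrightarrow> (\<lambda>n. g n x) \<longlonglongrightarrow> f x"
proof -
  obtain u :: "'a list \<Rightarrow> real" where u: "\<And>x. x \<in> branches T \<Longrightarrow>
      limsup (\<lambda>t. ereal (u (map x [0..<Suc t]))) = ereal (f x)"
    using assms(2) unfolding limsup_function_def by blast
  define S where "S n x = (SUP t\<in>{n..}. ereal (u (map x [0..<Suc t])))" for n x
  have S_finite: "\<bar>S n x\<bar> \<noteq> \<infinity>" if "x \<in> branches T" for n x
    unfolding S_def using u[OF that] by (intro tail_SUP_ereal_finite) simp
  have S_dec: "S (Suc n) x \<le> S n x" for n x
    unfolding S_def by (rule SUP_subset_mono) auto
  define g where "g n x = real_of_ereal (S n x)" for n x
  have "lsc_on (tree_topology T) (g n)" for n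
    unfolding g_def S_def using S_finite[unfolded S_def] by (rule lsc_on_tail_SUP_prefix[OF pruned])
  moreover have "g (Suc n) x \<le> g n x" if "x \<in> branches T" for n x
  proof -
    have "ereal (g (Suc n) x) \<le> ereal (g n x)"
      unfolding g_def using S_dec S_finite[OF that] by (simp add: ereal_real')
    then show ?thesis
      by simp
  qed
  moreover have "(\<lambda>n. g n x) \<longlonglongrightarrow> f x" if "x \<in> branches T" for x
  proof -
    have "decseq (\<lambda>n. S n x)"
      using S_dec by (simp add: decseq_Suc_iff)
    then have "(\<lambda>n. S n x) \<longlonglongrightarrow> ereal (f x)"
      using LIMSEQ_INF u[OF that] unfolding S_def limsup_INF_SUP by metis
    then show ?thesis
      unfolding g_def by (rule lim_real_of_ereal)
  qed
  ultimately show ?thesis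
    using that by blast
qed

lemma lsc_on_add_const:
  assumes "lsc_on X g"
  shows "lsc_on X (\<lambda>x. g x + c)"
proof -
  have "{x \<in> topspace X. r < g x + c} = {x \<in> topspace X. r - c < g x}" for r
    by auto
  then show ?thesis
    using assms by (simp add: lsc_on_def)
qed

lemma openin_strict_subgraph_lsc:
  assumes "lsc_on X g"
  shows "openin (prod_topology X euclideanreal) {(x, r). x \<in> topspace X \<and> r < g x}"
proof -
  have "{(x, r). x \<in> topspace X \<and> r < g x} = (\<Union>q. {x \<in> topspace X. q < g x} \<times> {..<q})"
  proof (intro equalityI subsetI)
    fix p assume "p \<in> {(x, r). x \<in> topspace X \<and> r < g x}"
    then obtain x r where p: "p = (x, r)" "x \<in> topspace X" "r < g x"
      by blast
    then obtain q where "r < q" "q < g x"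
      using dense by blast
    with p show "p \<in> (\<Union>q. {x \<in> topspace X. q < g x} \<times> {..<q})"
      by blast
  qed auto
  then show ?thesis
    using assms unfolding lsc_on_def by (auto simp: openin_prod_Times_iff intro!: openin_Union)
qed

lemma le_lim_iff_frequently_close:
  fixes b :: "nat \<Rightarrow> real"
  assumes "b \<longlonglongrightarrow> c"
  shows "r \<le> c \<longleftrightarrow> (\<forall>k N. \<exists>n\<ge>N. r < b n + 1 / Suc k)"
proof
  assume "r \<le> c"
  show "\<forall>k N. \<exists>n\<ge>N. r < b n + 1 / Suc k"
  proof (intro allI)
    fix k N :: nat
    have "c - 1 / Suc k < c"
      by simp
    then have "\<forall>\<^sub>F n in sequentially. c - 1 / Suc k < b n"
      by (rule order_tendstoD(1)[OF assms])
    then obtain M where "\<And>n. n \<ge> M \<Longrightarrow> c - 1 / Suc k < b n"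
      by (auto simp: eventually_sequentially)
    then have "max N M \<ge> N" "c - 1 / Suc k < b (max N M)"
      by auto
    then show "\<exists>n\<ge>N. r < b n + 1 / Suc k"
      using \<open>r \<le> c\<close> by (intro exI[of _ "max N M"]) auto
  qed
next
  assume close: "\<forall>k N. \<exists>n\<ge>N. r < b n + 1 / Suc k"
  show "r \<le> c"
  proof (rule ccontr)
    assume "\<not> r \<le> c"
    then have "(r - c) / 2 > 0"
      by simp
    then obtain k :: nat where k: "1 / Suc k < (r - c) / 2"
      using reals_Archimedean by (metis inverse_eq_divide)
    have "\<forall>\<^sub>F n in sequentially. b n < c + (r - c) / 2"
      using assms \<open>\<not> r \<le> c\<close> by (intro order_tendstoD(2)) auto
    then obtain N where N: "\<And>n. n \<ge> N \<Longrightarrow> b n < c + (r - c) / 2"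
      by (auto simp: eventually_sequentially)
    obtain n where n: "n \<ge> N" "r < b n + 1 / Suc k"
      using close by blast
    have "b n < c + (r - c) / 2"
      using N n(1) .
    with n(2) k show False
      by argo
  qed
qed

lemma gdelta_in_subgraph_lsc_limit:
  assumes "\<And>n. lsc_on X (g n)" and "\<And>x. x \<in> topspace X \<Longrightarrow> (\<lambda>n. g n x) \<longlonglongrightarrow> f x"
  shows "gdelta_in (prod_topology X euclideanreal) (subgraph (topspace X) f)"
proof -
  define G where "G k N = (\<Union>n\<in>{N..}. {(x, r). x \<in> topspace X \<and> r < g n x + 1 / Suc k})"
    for k N :: nat
  have G_open: "openin (prod_topology X euclideanreal) (G k N)" for k N
    unfolding G_def using openin_strict_subgraph_lsc[OF lsc_on_add_const[OF assms(1)]]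
    by (intro openin_Union) auto
  have "subgraph (topspace X) f = (\<Inter>(k, N). G k N)"
    using le_lim_iff_frequently_close[OF assms(2)] by (auto simp: subgraph_def G_def Bex_def)
  then show ?thesis
    by (auto intro!: gdelta_in_Inter intro: open_imp_gdelta_in G_open)
qed

lemma gdelta_in_continuous_map_preimage:
  assumes "continuous_map X Y h" and "gdelta_in Y S"
  shows "gdelta_in X {x \<in> topspace X. h x \<in> S}"
proof -
  obtain C where C: "\<And>n. openin Y (C n)" "\<And>n. C (Suc n) \<subseteq> C n" "\<Inter>(range C) = S"
    using assms(2) unfolding gdelta_in_descending by metis
  define D where "D n = {x \<in> topspace X. h x \<in> C n}" for n
  have "openin X (D n)" for n
    unfolding D_def using assms(1) C(1) by (rule openin_continuous_map_preimage)
  moreover have "D (Suc n) \<subseteq> D n" for n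
    unfolding D_def using C(2) by auto
  moreover have "\<Inter>(range D) = {x \<in> topspace X. h x \<in> S}"
    unfolding D_def C(3)[symmetric] by auto
  ultimately show ?thesis
    unfolding gdelta_in_descending by metis
qed

lemma gdelta_in_slice:
  assumes "gdelta_in (prod_topology X Y) S" and "y \<in> topspace Y"
  shows "gdelta_in X {x \<in> topspace X. (x, y) \<in> S}"
  using assms by (intro gdelta_in_continuous_map_preimage) (auto intro: continuous_map_pairedI)

text \<open>\<open>first_entry T k U s\<close>: among the prefixes of length at least \<open>k\<close> of a branch through
  \<open>s\<close>, \<open>s\<close> is the shortest one whose cylinder lies in \<open>U\<close>.\<close>

definition first_entry :: "'a list set \<Rightarrow> nat \<Rightarrow> (nat \<Rightarrow> 'a) set \<Rightarrow> 'a list \<Rightarrow> bool" where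
  "first_entry T k U s \<longleftrightarrow>
     k \<le> length s \<and> O_set T s \<subseteq> U \<and> \<not> (k < length s \<and> O_set T (butlast s) \<subseteq> U)"

lemma butlast_prefix: "butlast (map x [0..<t]) = map x [0..<t - 1]"
  by (cases t) simp_all

lemma first_entry_exists:
  assumes "openin (tree_topology T) U" "x \<in> U"
  shows "\<exists>t. first_entry T k U (map x [0..<t])"
proof -
  define P where "P t \<longleftrightarrow> k \<le> t \<and> O_set T (map x [0..<t]) \<subseteq> U" for t
  obtain t0 where "O_set T (map x [0..<t0]) \<subseteq> U"
    using openin_tree_topology_prefix_subset[OF assms] by blast
  then have "P (max t0 k)"
    unfolding P_def using O_set_prefix_antimono[of t0 "max t0 k" T x] by auto
  then have "P (LEAST t. P t)"
    by (rule LeastI)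
  moreover have "\<not> P ((LEAST t. P t) - 1)" if "k < (LEAST t. P t)"
    using that by (intro not_less_Least) simp
  ultimately have "first_entry T k U (map x [0..<(LEAST t. P t)])"
    unfolding first_entry_def butlast_prefix P_def by auto
  then show ?thesis ..
qed

lemma first_entry_unique:
  assumes "first_entry T k U (map x [0..<t])" "first_entry T k U (map x [0..<t'])"
  shows "t = t'"
proof -
  have "\<not> t < t'" if "first_entry T k U (map x [0..<t])" "first_entry T k U (map x [0..<t'])"
    for t t'
  proof
    assume "t < t'"
    then have "O_set T (map x [0..<t' - 1]) \<subseteq> O_set T (map x [0..<t])"
      by (intro O_set_prefix_antimono) simp
    with that \<open>t < t'\<close> show False
      unfolding first_entry_def butlast_prefix by auto
  qed
  with assms show ?thesis
    by (meson linorder_neqE_nat)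
qed

lemma first_entry_levels_unbounded:
  assumes "infinite E"
    and "\<And>t. t \<in> E \<Longrightarrow> I t \<le> K t \<and> first_entry T (K t) (V (I t) (K t)) (map x [0..<Suc t])"
  shows "\<exists>t\<in>E. B < K t"
proof (rule ccontr)
  assume "\<not> (\<exists>t\<in>E. B < K t)"
  then have "I t \<le> B \<and> K t \<le> B" if "t \<in> E" for t
    using assms(2)[OF that] that by (meson le_trans not_less)
  then have "(\<lambda>t. (I t, K t)) ` E \<subseteq> {..B} \<times> {..B}"
    by auto
  then have "finite ((\<lambda>t. (I t, K t)) ` E)"
    by (rule finite_subset) simp
  moreover have "inj_on (\<lambda>t. (I t, K t)) E"
  proof (rule inj_onI)
    fix t t' assume "t \<in> E" "t' \<in> E" "(I t, K t) = (I t', K t')"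
    then show "t = t'"
      using assms(2) first_entry_unique by (metis prod.inject Suc_inject)
  qed
  ultimately show False
    using assms(1) finite_imageD by blast
qed

text \<open>The default \<open>-length s\<close> eventually drops below every threshold, so along a branch
  large values of \<open>entry_value\<close> always come from first entries.\<close>

definition entry_value ::
    "'a list set \<Rightarrow> (nat \<Rightarrow> real) \<Rightarrow> (nat \<Rightarrow> nat \<Rightarrow> (nat \<Rightarrow> 'a) set) \<Rightarrow> 'a list \<Rightarrow> real" where
  "entry_value T q V s =
     Max (insert (- real (length s)) (q ` {i. i \<le> length s \<and> (\<exists>k\<ge>i. first_entry T k (V i k) s)}))"

lemma entry_value_ge:
  assumes "i \<le> k" "first_entry T k (V i k) s"
  shows "q i \<le> entry_value T q V s"
proof -
  have "i \<le> length s"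
    using assms unfolding first_entry_def by linarith
  with assms show ?thesis
    unfolding entry_value_def by (intro Max_ge) auto
qed

lemma entry_value_cases:
  "entry_value T q V s = - real (length s) \<or>
   (\<exists>i k. i \<le> k \<and> first_entry T k (V i k) s \<and> entry_value T q V s = q i)"
proof -
  have "entry_value T q V s \<in>
      insert (- real (length s)) (q ` {i. i \<le> length s \<and> (\<exists>k\<ge>i. first_entry T k (V i k) s)})"
    unfolding entry_value_def by (intro Max_in) auto
  then show ?thesis
    by auto
qed

lemma entry_value_frequently_ge:
  assumes "\<And>k. openin (tree_topology T) (V i k)" and "\<And>k. x \<in> V i k"
  shows "\<exists>\<^sub>F t in sequentially. q i \<le> entry_value T q V (map x [0..<Suc t])"
  unfolding frequently_sequentially
proof
  fix N
  define K where "K = max i (Suc N)"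
  obtain t where t: "first_entry T K (V i K) (map x [0..<t])"
    using first_entry_exists[OF assms] by blast
  then have "Suc N \<le> t"
    unfolding K_def first_entry_def by simp
  then obtain t' where "t = Suc t'" "N \<le> t'"
    by (metis Suc_le_D Suc_le_mono)
  moreover have "q i \<le> entry_value T q V (map x [0..<t])"
    using entry_value_ge[of i K T V "map x [0..<t]" q] t by (simp add: K_def)
  ultimately show "\<exists>t\<ge>N. q i \<le> entry_value T q V (map x [0..<Suc t])"
    by blast
qed

lemma entry_value_frequently_gt_imp_frequently_mem:
  assumes x: "x \<in> branches T"
    and V_mono: "\<And>i k. m \<le> k \<Longrightarrow> q m \<le> q i \<Longrightarrow> V i k \<subseteq> V m k"
    and freq: "\<exists>\<^sub>F t in sequentially. q m < entry_value T q V (map x [0..<Suc t])"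
  shows "\<exists>\<^sub>F k in sequentially. x \<in> V m k"
  unfolding frequently_sequentially
proof
  fix K
  obtain N0 :: nat where N0: "- q m < N0"
    using reals_Archimedean2 by blast
  define E where "E = {t. N0 \<le> t \<and> q m < entry_value T q V (map x [0..<Suc t])}"
  have "infinite E"
    using freq unfolding E_def frequently_sequentially infinite_nat_iff_unbounded_le
    by (metis max.bounded_iff max.cobounded2 mem_Collect_eq)
  have "\<exists>i k. q m < q i \<and> i \<le> k \<and> first_entry T k (V i k) (map x [0..<Suc t])"
    if "t \<in> E" for t
  proof -
    have "- real (Suc t) < q m" "q m < entry_value T q V (map x [0..<Suc t])"
      using that N0 unfolding E_def by auto
    then show ?thesis
      using entry_value_cases[of T q V "map x [0..<Suc t]"] by (auto simp del: upt_Suc)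
  qed
  then obtain I K' where IK: "\<And>t. t \<in> E \<Longrightarrow>
      q m < q (I t) \<and> I t \<le> K' t \<and> first_entry T (K' t) (V (I t) (K' t)) (map x [0..<Suc t])"
    by metis
  obtain t where t: "t \<in> E" "max K m < K' t"
    using first_entry_levels_unbounded[OF \<open>infinite E\<close>, of I K' T V x "max K m"] IK by blast
  have "x \<in> O_set T (map x [0..<Suc t])"
    by (rule mem_O_set_prefix[OF x])
  also have "\<dots> \<subseteq> V (I t) (K' t)"
    using IK[OF t(1)] unfolding first_entry_def by blast
  also have "\<dots> \<subseteq> V m (K' t)"
    using IK[OF t(1)] t(2) by (intro V_mono) auto
  finally show "\<exists>k\<ge>K. x \<in> V m k"
    using t(2) by (intro exI[of _ "K' t"]) auto
qed

lemma limsup_eq_by_dense_bounds: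
  fixes b q :: "nat \<Rightarrow> real"
  assumes dense: "\<And>a d. a < d \<Longrightarrow> \<exists>i. a < q i \<and> q i < d"
    and lower: "\<And>i. q i < c \<Longrightarrow> \<exists>\<^sub>F t in sequentially. q i \<le> b t"
    and upper: "\<And>i. c < q i \<Longrightarrow> \<forall>\<^sub>F t in sequentially. b t \<le> q i"
  shows "limsup (\<lambda>t. ereal (b t)) = ereal c"
proof (rule antisym)
  show "limsup (\<lambda>t. ereal (b t)) \<le> ereal c"
  proof (rule ccontr)
    assume "\<not> limsup (\<lambda>t. ereal (b t)) \<le> ereal c"
    then obtain z where "ereal c < ereal z" "ereal z < limsup (\<lambda>t. ereal (b t))"
      using ereal_dense2 by (meson not_le)
    then have z: "c < z" "ereal z < limsup (\<lambda>t. ereal (b t))"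
      by simp_all
    then obtain i where i: "c < q i" "q i < z"
      using dense by blast
    have "limsup (\<lambda>t. ereal (b t)) \<le> ereal (q i)"
      using upper[OF i(1)] by (intro Limsup_bounded) simp
    with z(2) have "ereal z < ereal (q i)"
      by (rule less_le_trans)
    with i(2) show False
      by simp
  qed
  show "ereal c \<le> limsup (\<lambda>t. ereal (b t))"
  proof (rule ccontr)
    assume "\<not> ereal c \<le> limsup (\<lambda>t. ereal (b t))"
    then obtain z where "limsup (\<lambda>t. ereal (b t)) < ereal z" "ereal z < ereal c"
      using ereal_dense2 by (meson not_le)
    then have z: "limsup (\<lambda>t. ereal (b t)) < ereal z" "z < c"
      by simp_all
    then obtain i where i: "z < q i" "q i < c"
      using dense by blast
    have "limsup (\<lambda>t. ereal (b t)) < ereal (q i)"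
      using z(1) by (rule less_trans) (simp add: i(1))
    then have "\<forall>\<^sub>F t in sequentially. ereal (b t) < ereal (q i)"
      by (rule Limsup_lessD)
    then have "\<not> (\<exists>\<^sub>F t in sequentially. q i \<le> b t)"
      unfolding not_frequently by (rule eventually_mono) simp
    with lower[OF i(2)] show False
      by blast
  qed
qed

lemma limsup_function_entry_value:
  fixes q :: "nat \<Rightarrow> real"
  assumes pruned: "pruned_tree T"
    and dense: "\<And>a d. a < d \<Longrightarrow> \<exists>i. a < q i \<and> q i < d"
    and V_open: "\<And>i k. openin (tree_topology T) (V i k)"
    and V_superlevel: "\<And>x i k. x \<in> branches T \<Longrightarrow> q i \<le> f x \<Longrightarrow> x \<in> V i k"
    and V_mono: "\<And>i m k. m \<le> k \<Longrightarrow> q m \<le> q i \<Longrightarrow> V i k \<subseteq> V m k"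
    and V_limit: "\<And>x m. x \<in> branches T \<Longrightarrow> \<exists>\<^sub>F k in sequentially. x \<in> V m k \<Longrightarrow> q m \<le> f x"
  shows "limsup_function T f"
  unfolding limsup_function_def
proof (intro exI ballI)
  fix x assume x: "x \<in> branches T"
  show "limsup (\<lambda>t. ereal (entry_value T q V (map x [0..<Suc t]))) = ereal (f x)"
  proof (rule limsup_eq_by_dense_bounds[OF dense])
    fix i assume "q i < f x"
    then show "\<exists>\<^sub>F t in sequentially. q i \<le> entry_value T q V (map x [0..<Suc t])"
      using x by (intro entry_value_frequently_ge V_open V_superlevel) auto
  next
    fix m assume "f x < q m"
    show "\<forall>\<^sub>F t in sequentially. entry_value T q V (map x [0..<Suc t]) \<le> q m"
    proof (rule ccontr)
      assume "\<not> (\<forall>\<^sub>F t in sequentially. entry_value T q V (map x [0..<Suc t]) \<le> q m)"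
      then have "\<exists>\<^sub>F t in sequentially. q m < entry_value T q V (map x [0..<Suc t])"
        by (simp add: not_eventually not_le)
      then have "\<exists>\<^sub>F k in sequentially. x \<in> V m k"
        using entry_value_frequently_gt_imp_frequently_mem[OF x] V_mono by blast
      with \<open>f x < q m\<close> show False
        using V_limit[OF x] by fastforce
    qed
  qed
qed

lemma rat_enumeration_dense:
  fixes a d :: real
  assumes "a < d"
  shows "\<exists>i. a < of_rat (from_nat i) \<and> of_rat (from_nat i) < d"
proof -
  obtain r where "r \<in> \<rat>" "a < r" "r < d"
    using Rats_dense_in_real[OF assms] by blast
  then obtain r' where "r = of_rat r'"
    by (auto elim: Rats_cases)
  then have "r = of_rat (from_nat (to_nat r'))"
    by simp
  with \<open>a < r\<close> \<open>r < d\<close> show ?thesis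
    by metis
qed

lemma gdelta_superlevels_imp_limsup_function:
  fixes T :: "('a :: countable) list set"
  assumes pruned: "pruned_tree T"
    and gdelta: "\<And>r. gdelta_in (tree_topology T) {x \<in> branches T. r \<le> f x}"
  shows "limsup_function T f"
proof -
  let ?\<tau> = "tree_topology T"
  obtain C where C_open: "\<And>r n. openin ?\<tau> (C r n)" and C_dec: "\<And>r n. C r (Suc n) \<subseteq> C r n"
    and C_Inter: "\<And>r. \<Inter>(range (C r)) = {x \<in> branches T. r \<le> f x}"
    using gdelta unfolding gdelta_in_descending by metis
  define q :: "nat \<Rightarrow> real" where "q i = of_rat (from_nat i)" for i
  define V where "V i k = (\<Inter>j\<in>{j. j \<le> k \<and> q j \<le> q i}. C (q j) k) \<inter> topspace ?\<tau>" for i k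
  show ?thesis
  proof (rule limsup_function_entry_value[OF pruned])
    show "\<exists>i. a < q i \<and> q i < d" if "a < d" for a d
      unfolding q_def using that by (rule rat_enumeration_dense)
    show "openin ?\<tau> (V i k)" for i k
      unfolding V_def using C_open by (intro openin_INT) auto
    show "x \<in> V i k" if "x \<in> branches T" "q i \<le> f x" for x i k
      using that C_Inter topspace_tree_topology[OF pruned] unfolding V_def by fastforce
    show "V i k \<subseteq> V m k" if "m \<le> k" "q m \<le> q i" for i m k
      using that unfolding V_def by auto
    show "q m \<le> f x" if x: "x \<in> branches T" and often: "\<exists>\<^sub>F k in sequentially. x \<in> V m k"
      for x m
    proof -
      have "x \<in> C (q m) n" for n
      proof -
        obtain k where "max n m \<le> k" "x \<in> V m k"
          using often unfolding frequently_sequentially by blast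
        then have "x \<in> C (q m) k"
          unfolding V_def by auto
        moreover have "C (q m) k \<subseteq> C (q m) n"
          using lift_Suc_antimono_le[of "C (q m)"] C_dec \<open>max n m \<le> k\<close> by auto
        ultimately show ?thesis
          by blast
      qed
      then show ?thesis
        using C_Inter[of "q m"] x by blast
    qed
  qed
qed

theorem mainTheorem1:
  fixes T :: "('a :: countable) list set"
    and f :: "(nat \<Rightarrow> 'a) \<Rightarrow> real"
  assumes "pruned_tree T"
  defines "X \<equiv> branches T"
      and "\<tau> \<equiv> tree_topology T"
  defines "C1 \<equiv> limsup_function T f"
      and "C2 \<equiv> (\<exists>g :: nat \<Rightarrow> (nat \<Rightarrow> 'a) \<Rightarrow> real.
                  (\<forall>n. lsc_on \<tau> (g n)) \<and> (\<forall>x\<in>X. (\<lambda>n. g n x) \<longlonglongrightarrow> f x))"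
      and "C3 \<equiv> (\<exists>g :: nat \<Rightarrow> (nat \<Rightarrow> 'a) \<Rightarrow> real.
                  (\<forall>n. lsc_on \<tau> (g n)) \<and> (\<forall>n. \<forall>x\<in>X. g (Suc n) x \<le> g n x) \<and>
                  (\<forall>x\<in>X. (\<lambda>n. g n x) \<longlonglongrightarrow> f x))"
      and "C4 \<equiv> gdelta_in (prod_topology \<tau> euclideanreal) (subgraph X f)"
      and "C5 \<equiv> (\<forall>r::real. gdelta_in \<tau> {x \<in> X. r \<le> f x})"
  shows "(C1 \<longleftrightarrow> C2) \<and> (C2 \<longleftrightarrow> C3) \<and> (C3 \<longleftrightarrow> C4) \<and> (C4 \<longleftrightarrow> C5)"
proof -
  have X: "topspace \<tau> = X"
    unfolding X_def \<tau>_def using assms(1) by (rule topspace_tree_topology)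
  have "C1 \<Longrightarrow> C3"
    unfolding C1_def C3_def X_def \<tau>_def
    by (erule limsup_function_imp_decreasing_lsc_limit[OF assms(1)]) blast
  moreover have "C3 \<Longrightarrow> C2"
    unfolding C2_def C3_def by blast
  moreover have "C2 \<Longrightarrow> C4"
    unfolding C2_def C4_def using gdelta_in_subgraph_lsc_limit[of \<tau> _ f] X by auto
  moreover have "C4 \<Longrightarrow> C5"
  proof -
    have "{x \<in> topspace \<tau>. (x, r) \<in> subgraph X f} = {x \<in> X. r \<le> f x}" for r
      using X by (auto simp: subgraph_def)
    then show "C4 \<Longrightarrow> C5"
      unfolding C4_def C5_def using gdelta_in_slice[of \<tau> euclideanreal "subgraph X f"] by auto
  qed
  moreover have "C5 \<Longrightarrow> C1"
    unfolding C5_def C1_def X_def \<tau>_def using gdelta_superlevels_imp_limsup_function[OF assms(1)] by blast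
  ultimately show ?thesis
    by blast
qed

end
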